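(* Let $k$ be a field, $R=k[x_1,\ldots,x_n]$, and let $I$ be an almost reverse lexicographic ideal in $R$ whose last generator is $M_\omega=x^\omega$ with $\omega=(\omega_1,\ldots,\omega_\mu)$, $\omega_\mu>0$, $\mu\ge2$. Let $1\le i\le\mu-1$. For every $\alpha=(\alpha_1,\ldots,\alpha_i)\in\mathcal{I}_i$: (1) $0<f_{i+1}(\alpha)<\infty$; (2) $x^\alpha x_{i+1}^{f_{i+1}(\alpha)}\in\mathcal{G}(I)$; (3) if $\alpha_j\ge1$ for some $1\le j\le i$, then $f_{i+1}(\alpha_1,\ldots,\alpha_j,\ldots,\alpha_i)+1\le f_{i+1}(\alpha_1,\ldots,\alpha_j-1,\ldots,\alpha_i)$.
   Context: Monomial order: degree reverse lexicographic: for $M=x^\alpha,N=x^\beta$, $M>N$ iff $\deg M>\deg N$, or degrees are equal and for the largest $s$ with $\alpha_s\neq\beta_s$ one has $\alpha_s<\beta_s$. For $\alpha\in\mathbb{Z}^s_{\ge0}$, $x^\alpha=x_1^{\alpha_1}\cdots x_s^{\alpha_s}$, $|\alpha|=\sum\alpha_j$, and $\alpha\le\beta$ iff $x^\alpha\le x^\beta$. A monomial ideal $I$ is almost reverse lexicographic if for every monomial $M$ and every minimal monomial generator $N$ of $I$ with $\deg M=\deg N$ and $M>N$, one has $M\in I$. $\mathcal{G}(I)$ is the minimal monomial generating set; $\max M$ is the largest $i$ with $x_i\mid M$. The last generator $M_\omega$ is the element of $\mathcal{G}(I)$ of maximal degree that is smallest in the order among elements of $\mathcal{G}(I)$ of that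 degree; $\mu=\max M_\omega$. $f_1=\min\{t:x_1^t\in I\}$; for $2\le i\le\mu$, $\alpha\in\mathbb{Z}^{i-1}_{\ge0}$, $f_i(\alpha)=\min\{t\ge0:x^\alpha x_i^t\in I\}\in\mathbb{Z}_{\ge0}\cup\{\infty\}$. For $1\le i\le\mu-2$, $\mathcal{I}_i=\{(\alpha_1,\ldots,\alpha_i)\in\mathbb{Z}^i_{\ge0}: 0\le\alpha_1<f_1,\ 0\le\alpha_j<f_j(\alpha_1,\ldots,\alpha_{j-1})\ (2\le j\le i)\}$, and $\mathcal{I}_{\mu-1}$ is the set of $(\alpha_1,\ldots,\alpha_{\mu-1})$ satisfying these inequalities for $j\le\mu-1$ together with $(\alpha_1,\ldots,\alpha_{\mu-1})\ge(\omega_1,\ldots,\omega_{\mu-1})$. *)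

theory Defs
  imports Main "HOL-Library.Extended_Nat"
begin

text \<open>Monomials of k[x_1,...,x_n] are represented by exponent vectors
  a :: nat => nat with a j = 0 outside {1..n}. A monomial ideal is represented
  by the set of (exponent vectors of) monomials it contains.\<close>

definition mon :: "nat \<Rightarrow> (nat \<Rightarrow> nat) set" where
  "mon n = {a. \<forall>j. (j = 0 \<or> n < j) \<longrightarrow> a j = 0}"

definition mdeg :: "nat \<Rightarrow> (nat \<Rightarrow> nat) \<Rightarrow> nat" where
  "mdeg n a = (\<Sum>j = 1..n. a j)"

definition mdvd :: "(nat \<Rightarrow> nat) \<Rightarrow> (nat \<Rightarrow> nat) \<Rightarrow> bool" where
  "mdvd a b \<longleftrightarrow> (\<forall>j. a j \<le> b j)"

text \<open>Degree reverse lexicographic order: rl_gt n a b means x^a > x^b.\<close>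
definition rl_gt :: "nat \<Rightarrow> (nat \<Rightarrow> nat) \<Rightarrow> (nat \<Rightarrow> nat) \<Rightarrow> bool" where
  "rl_gt n a b \<longleftrightarrow> mdeg n a > mdeg n b \<or>
     (mdeg n a = mdeg n b \<and>
      (\<exists>s\<in>{1..n}. a s \<noteq> b s \<and> (\<forall>t\<in>{s<..n}. a t = b t) \<and> a s < b s))"

definition rl_le :: "nat \<Rightarrow> (nat \<Rightarrow> nat) \<Rightarrow> (nat \<Rightarrow> nat) \<Rightarrow> bool" where
  "rl_le n a b \<longleftrightarrow> a = b \<or> rl_gt n b a"

definition monomial_ideal :: "nat \<Rightarrow> (nat \<Rightarrow> nat) set \<Rightarrow> bool" where
  "monomial_ideal n I \<longleftrightarrow> I \<subseteq> mon n \<and>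
     (\<forall>a\<in>I. \<forall>b\<in>mon n. mdvd a b \<longrightarrow> b \<in> I)"

definition mingens :: "(nat \<Rightarrow> nat) set \<Rightarrow> (nat \<Rightarrow> nat) set" where
  "mingens I = {a\<in>I. \<forall>b\<in>I. mdvd b a \<longrightarrow> b = a}"

definition almost_revlex :: "nat \<Rightarrow> (nat \<Rightarrow> nat) set \<Rightarrow> bool" where
  "almost_revlex n I \<longleftrightarrow> (\<forall>M\<in>mon n. \<forall>N\<in>mingens I.
     mdeg n M = mdeg n N \<and> rl_gt n M N \<longrightarrow> M \<in> I)"

definition last_gen :: "nat \<Rightarrow> (nat \<Rightarrow> nat) set \<Rightarrow> (nat \<Rightarrow> nat) \<Rightarrow> bool" where
  "last_gen n I w \<longleftrightarrow> w \<in> mingens I \<and>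
     (\<forall>b\<in>mingens I. mdeg n b \<le> mdeg n w \<and>
        (mdeg n b = mdeg n w \<longrightarrow> rl_le n w b))"

definition xmon :: "nat \<Rightarrow> (nat \<Rightarrow> nat) \<Rightarrow> nat \<Rightarrow> (nat \<Rightarrow> nat)" where
  "xmon i \<alpha> t = (\<lambda>j. if 1 \<le> j \<and> j < i then \<alpha> j else if j = i then t else 0)"

definition fI :: "(nat \<Rightarrow> nat) set \<Rightarrow> nat \<Rightarrow> (nat \<Rightarrow> nat) \<Rightarrow> enat" where
  "fI I i \<alpha> = (if \<exists>t. xmon i \<alpha> t \<in> I then enat (LEAST t. xmon i \<alpha> t \<in> I) else \<infinity>)"

definition trunc :: "nat \<Rightarrow> (nat \<Rightarrow> nat) \<Rightarrow> (nat \<Rightarrow> nat)" where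
  "trunc m a = (\<lambda>j. if 1 \<le> j \<and> j \<le> m then a j else 0)"

text \<open>The set I_i (tuples represented as vectors vanishing outside {1..i}).\<close>
definition Iset :: "nat \<Rightarrow> (nat \<Rightarrow> nat) set \<Rightarrow> (nat \<Rightarrow> nat) \<Rightarrow> nat \<Rightarrow> nat \<Rightarrow> (nat \<Rightarrow> nat) set" where
  "Iset n I w \<mu> i = {\<alpha>. (\<forall>j. (j = 0 \<or> i < j) \<longrightarrow> \<alpha> j = 0) \<and>
      (\<forall>j\<in>{1..i}. enat (\<alpha> j) < fI I j \<alpha>) \<and>
      (i = \<mu> - 1 \<longrightarrow> rl_le n (trunc (\<mu> - 1) w) \<alpha>)}"

end

theory Submission
  imports Defs
begin

text \<open>Almost reverse lexicographic ideals admit an exchange: if \<open>x\<^sub>k\<close> divides a minimal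
  generator \<open>G\<close> and \<open>j < k\<close>, then \<open>G x\<^sub>j / x\<^sub>k \<in> I\<close>. Suppose \<open>f' = f\<^sub>i\<^sub>+\<^sub>1(\<alpha> - e\<^sub>j)\<close> were at most
  \<open>f\<^sub>i\<^sub>+\<^sub>1(\<alpha>)\<close>. A minimal generator dividing \<open>x\<^sup>\<alpha>\<^sup>-\<^sup>e\<^sup>j x\<^sub>i\<^sub>+\<^sub>1\<^sup>f\<^sup>'\<close> involves \<open>x\<^sub>i\<^sub>+\<^sub>1\<close>, since \<open>x\<^sup>\<alpha> \<notin> I\<close>;
  exchanging that \<open>x\<^sub>i\<^sub>+\<^sub>1\<close> for \<open>x\<^sub>j\<close> gives an element of \<open>I\<close> dividing \<open>x\<^sup>\<alpha> x\<^sub>i\<^sub>+\<^sub>1\<^sup>f\<^sup>'\<^sup>-\<^sup>1\<close>, a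
  contradiction; this is (3). By (3) no proper divisor of \<open>x\<^sup>\<alpha> x\<^sub>i\<^sub>+\<^sub>1\<^sup>f\<close> lies in \<open>I\<close>, which is (2).
  For finiteness: every monomial in \<open>x\<^sub>1,\<dots>,x\<^sub>\<mu>\<close> of degree at least \<open>deg M\<^sub>\<omega>\<close> with smaller
  \<open>x\<^sub>\<mu>\<close>-exponent than \<open>M\<^sub>\<omega>\<close> lies in \<open>I\<close>. For \<open>i + 1 < \<mu>\<close> a high power of \<open>x\<^sub>i\<^sub>+\<^sub>1\<close> is such a monomial;
  for \<open>i + 1 = \<mu>\<close> the condition \<open>\<alpha> \<ge> (\<omega>\<^sub>1,\<dots>,\<omega>\<^sub>\<mu>\<^sub>-\<^sub>1)\<close> makes \<open>x\<^sup>\<alpha> x\<^sub>\<mu>\<^sup>\<omega>\<^sup>\<mu>\<close> equal to \<open>M\<^sub>\<omega>\<close>,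
  reverse lexicographically larger in the same degree, or of larger degree.\<close>

lemma monomial_ideal_mdvd_closed:
  "monomial_ideal n I \<Longrightarrow> a \<in> I \<Longrightarrow> b \<in> mon n \<Longrightarrow> mdvd a b \<Longrightarrow> b \<in> I"
  unfolding monomial_ideal_def by blast

lemma monomial_ideal_mem_mon: "monomial_ideal n I \<Longrightarrow> a \<in> I \<Longrightarrow> a \<in> mon n"
  unfolding monomial_ideal_def by blast

lemma mingens_mem: "a \<in> mingens I \<Longrightarrow> a \<in> I"
  by (simp add: mingens_def)

lemma xmon_mem_mon: "k \<in> {1..n} \<Longrightarrow> xmon k a t \<in> mon n"
  by (auto simp: mon_def xmon_def)

lemma mdeg_fun_upd:
  assumes "k \<in> {1..n}"
  shows "mdeg n (a(k := v)) + a k = mdeg n a + v"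
proof -
  have "mdeg n (a(k := v)) = v + (\<Sum>j\<in>{1..n}-{k}. a j)"
    unfolding mdeg_def using assms by (subst sum.remove[of _ k]) (auto intro!: sum.cong)
  moreover have "mdeg n a = a k + (\<Sum>j\<in>{1..n}-{k}. a j)"
    unfolding mdeg_def using assms by (subst sum.remove[of _ k]) auto
  ultimately show ?thesis by simp
qed

lemma mdeg_mono: "mdvd a b \<Longrightarrow> mdeg n a \<le> mdeg n b"
  unfolding mdeg_def mdvd_def by (intro sum_mono) auto

lemma mdvd_mdeg_eq_imp_eq:
  assumes "a \<in> mon n" "b \<in> mon n" "mdvd a b" "mdeg n a = mdeg n b"
  shows "a = b"
proof (rule ccontr)
  assume "a \<noteq> b"
  then obtain j where j: "a j \<noteq> b j" by auto
  have "j \<in> {1..n}"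
  proof (rule ccontr)
    assume "j \<notin> {1..n}"
    with assms(1,2) j show False by (auto simp: mon_def not_le)
  qed
  moreover have "a j < b j" using j assms(3) unfolding mdvd_def by (metis le_neq_implies_less)
  ultimately have "mdeg n a < mdeg n b"
    using assms(3) unfolding mdeg_def mdvd_def by (intro sum_strict_mono_ex1) auto
  with assms(4) show False by simp
qed

lemma mingens_mdvd:
  assumes mi: "monomial_ideal n I" and "a \<in> I"
  obtains g where "g \<in> mingens I" "mdvd g a"
proof -
  let ?P = "\<lambda>d. \<exists>b\<in>I. mdvd b a \<and> mdeg n b = d"
  have "?P (mdeg n a)" using \<open>a \<in> I\<close> by (auto simp: mdvd_def)
  then have "?P (LEAST d. ?P d)" by (rule LeastI)
  then obtain b where b: "b \<in> I" "mdvd b a" "mdeg n b = (LEAST d. ?P d)" by blast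
  have "b \<in> mingens I"
    unfolding mingens_def
  proof (intro CollectI conjI ballI impI)
    fix c assume c: "c \<in> I" "mdvd c b"
    then have "mdvd c a" using b(2) unfolding mdvd_def using le_trans by blast
    with c(1) have "mdeg n b \<le> mdeg n c" unfolding b(3) by (blast intro: Least_le)
    with mdeg_mono[OF c(2), of n] show "c = b"
      using mdvd_mdeg_eq_imp_eq[of c n b] c b(1) monomial_ideal_mem_mon[OF mi] by auto
  qed (rule b(1))
  with b(2) show thesis using that by blast
qed

lemma almost_revlexD:
  "almost_revlex n I \<Longrightarrow> M \<in> mon n \<Longrightarrow> N \<in> mingens I \<Longrightarrow> mdeg n M = mdeg n N \<Longrightarrow>
    rl_gt n M N \<Longrightarrow> M \<in> I"
  unfolding almost_revlex_def by blast

lemma rl_gt_fun_upd_same: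
  assumes "rl_gt n a b" "a k = b k" "k \<in> {1..n}"
  shows "rl_gt n (a(k := c)) (b(k := c))"
proof -
  have deg: "mdeg n (a(k := c)) + b k = mdeg n a + c" "mdeg n (b(k := c)) + b k = mdeg n b + c"
    using mdeg_fun_upd[OF assms(3)] assms(2) by metis+
  from assms(1) consider "mdeg n a > mdeg n b"
    | s where "mdeg n a = mdeg n b" "s \<in> {1..n}" "a s \<noteq> b s"
        "\<forall>t\<in>{s<..n}. a t = b t" "a s < b s"
    unfolding rl_gt_def by blast
  then show ?thesis
  proof cases
    case 1
    with deg show ?thesis by (simp add: rl_gt_def)
  next
    case (2 s)
    with assms(2) have "s \<noteq> k" by auto
    with 2 deg show ?thesis unfolding rl_gt_def by (intro disjI2 conjI bexI[of _ s]) auto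
  qed
qed

lemma almost_revlex_exchange:
  assumes mi: "monomial_ideal n I" and ar: "almost_revlex n I" and G: "G \<in> mingens I"
    and "1 \<le> j" "j < k" "k \<le> n" "0 < G k"
  shows "G(k := G k - 1, j := G j + 1) \<in> I"
proof -
  let ?H = "G(k := G k - 1)"
  have jk: "j \<in> {1..n}" "k \<in> {1..n}" using assms by auto
  have "mdeg n (?H(j := G j + 1)) + ?H j = mdeg n ?H + (G j + 1)"
    "mdeg n ?H + G k = mdeg n G + (G k - 1)"
    by (rule mdeg_fun_upd[OF jk(1)], rule mdeg_fun_upd[OF jk(2)])
  with assms have deg: "mdeg n (?H(j := G j + 1)) = mdeg n G" by simp
  have "G \<in> mon n" using monomial_ideal_mem_mon[OF mi mingens_mem[OF G]] .
  with jk have "?H(j := G j + 1) \<in> mon n" by (auto simp: mon_def)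
  moreover have "rl_gt n (?H(j := G j + 1)) G"
    unfolding rl_gt_def using deg jk assms by (intro disjI2 conjI bexI[of _ k]) auto
  ultimately show ?thesis using almost_revlexD[OF ar _ G] deg by blast
qed

lemma almost_revlex_mem_if_mdeg_ge:
  assumes mi: "monomial_ideal n I" and ar: "almost_revlex n I" and \<omega>: "\<omega> \<in> mingens I"
    and \<omega>_supp: "\<forall>j>\<mu>. \<omega> j = 0" and "1 \<le> \<mu>" "\<mu> \<le> n"
  shows "a \<in> mon n \<Longrightarrow> \<forall>j>\<mu>. a j = 0 \<Longrightarrow> a \<mu> < \<omega> \<mu> \<Longrightarrow> mdeg n \<omega> \<le> mdeg n a \<Longrightarrow> a \<in> I"
proof (induction "mdeg n a - mdeg n \<omega>" arbitrary: a)
  case 0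
  then have "mdeg n a = mdeg n \<omega>" by simp
  moreover have "\<forall>t\<in>{\<mu><..n}. a t = \<omega> t" using 0(3) \<omega>_supp by simp
  ultimately have "rl_gt n a \<omega>"
    unfolding rl_gt_def using 0(4) \<open>1 \<le> \<mu>\<close> \<open>\<mu> \<le> n\<close>
    by (intro disjI2 conjI bexI[of _ \<mu>]) simp_all
  with \<open>mdeg n a = mdeg n \<omega>\<close> show ?case using almost_revlexD[OF ar \<open>a \<in> mon n\<close> \<omega>] by blast
next
  case (Suc d)
  then have "mdeg n a \<noteq> 0" by simp
  then have "\<exists>j\<in>{1..n}. a j \<noteq> 0" unfolding mdeg_def by (meson sum.neutral)
  then obtain j where j: "j \<in> {1..n}" "a j > 0" by blast
  let ?b = "a(j := a j - 1)"
  have "mdeg n ?b + a j = mdeg n a + (a j - 1)" by (rule mdeg_fun_upd[OF j(1)])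
  with j have deg: "mdeg n ?b + 1 = mdeg n a" by simp
  have "?b \<in> I"
  proof (rule Suc.hyps(1))
    show "d = mdeg n ?b - mdeg n \<omega>" "mdeg n \<omega> \<le> mdeg n ?b" using Suc.hyps(2) deg by simp_all
    show "?b \<in> mon n" using Suc.prems(1) by (simp add: mon_def)
  qed (use Suc.prems in auto)
  from monomial_ideal_mdvd_closed[OF mi this Suc.prems(1)] show ?case by (simp add: mdvd_def)
qed

lemma xmon_mem_iff_fI_le:
  assumes mi: "monomial_ideal n I" and k: "k \<in> {1..n}"
  shows "xmon k a t \<in> I \<longleftrightarrow> fI I k a \<le> enat t"
proof
  assume "xmon k a t \<in> I"
  then show "fI I k a \<le> enat t" by (auto simp: fI_def intro: Least_le)
next
  assume le: "fI I k a \<le> enat t"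
  then have ex: "\<exists>s. xmon k a s \<in> I" by (auto simp: fI_def split: if_splits)
  let ?f = "LEAST s. xmon k a s \<in> I"
  have "xmon k a ?f \<in> I" using ex by (rule LeastI_ex)
  moreover have "?f \<le> t" using le ex by (simp add: fI_def)
  then have "mdvd (xmon k a ?f) (xmon k a t)" by (simp add: mdvd_def xmon_def)
  ultimately show "xmon k a t \<in> I"
    using monomial_ideal_mdvd_closed[OF mi _ xmon_mem_mon[OF k]] by blast
qed

lemma fI_enat_mem:
  assumes "monomial_ideal n I" "k \<in> {1..n}" "fI I k a = enat f"
  shows "xmon k a f \<in> I"
  using xmon_mem_iff_fI_le[OF assms(1,2)] assms(3) by simp

lemma xmon_shift_mem:
  assumes mi: "monomial_ideal n I" and ar: "almost_revlex n I" and k: "k \<in> {1..n}"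
    and j: "1 \<le> j" "j < k" "1 \<le> \<alpha> j" and not0: "xmon k \<alpha> 0 \<notin> I"
    and mem: "xmon k (\<alpha>(j := \<alpha> j - 1)) t \<in> I"
  shows "0 < t \<and> xmon k \<alpha> (t - 1) \<in> I"
proof -
  obtain G where G: "G \<in> mingens I" "mdvd G (xmon k (\<alpha>(j := \<alpha> j - 1)) t)"
    using mingens_mdvd[OF mi mem] .
  have Gm: "G m \<le> xmon k (\<alpha>(j := \<alpha> j - 1)) t m" for m using G(2) by (simp add: mdvd_def)
  note closed = monomial_ideal_mdvd_closed[OF mi _ xmon_mem_mon[OF k]]
  have "G k \<noteq> 0"
  proof
    assume "G k = 0"
    have "mdvd G (xmon k \<alpha> 0)"
      unfolding mdvd_def
    proof
      fix m show "G m \<le> xmon k \<alpha> 0 m"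
        using Gm[of m] \<open>G k = 0\<close> by (auto simp: xmon_def split: if_splits)
    qed
    with not0 closed mingens_mem[OF G(1)] show False by blast
  qed
  moreover have "G k \<le> t" using Gm[of k] by (simp add: xmon_def)
  moreover have "mdvd (G(k := G k - 1, j := G j + 1)) (xmon k \<alpha> (t - 1))"
    unfolding mdvd_def
  proof
    fix m show "(G(k := G k - 1, j := G j + 1)) m \<le> xmon k \<alpha> (t - 1) m"
      using Gm[of m] j by (auto simp: xmon_def split: if_splits)
  qed
  moreover have "G(k := G k - 1, j := G j + 1) \<in> I"
    using almost_revlex_exchange[OF mi ar G(1) j(1,2)] k \<open>G k \<noteq> 0\<close> by simp
  ultimately show ?thesis using closed by auto
qed

lemma fI_strict_decrease:
  assumes mi: "monomial_ideal n I" and ar: "almost_revlex n I" and k: "k \<in> {1..n}"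
    and "1 \<le> j" "j < k" "1 \<le> \<alpha> j" and "xmon k \<alpha> 0 \<notin> I"
  shows "fI I k \<alpha> + 1 \<le> fI I k (\<alpha>(j := \<alpha> j - 1))"
proof (cases "fI I k (\<alpha>(j := \<alpha> j - 1))")
  case (enat t)
  with xmon_shift_mem[OF assms fI_enat_mem[OF mi k enat]]
  have "0 < t" "fI I k \<alpha> \<le> enat (t - 1)"
    using xmon_mem_iff_fI_le[OF mi k] by auto
  with enat show ?thesis by (cases "fI I k \<alpha>") (auto simp: one_enat_def)
qed simp

lemma xmon_fI_mem_mingens:
  assumes mi: "monomial_ideal n I" and ar: "almost_revlex n I" and k: "k \<in> {1..n}"
    and not0: "xmon k \<alpha> 0 \<notin> I" and f: "fI I k \<alpha> = enat f"
  shows "xmon k \<alpha> f \<in> mingens I"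
  unfolding mingens_def
proof (intro CollectI conjI ballI impI)
  show "xmon k \<alpha> f \<in> I" using fI_enat_mem[OF mi k f] .
  fix b assume b: "b \<in> I" "mdvd b (xmon k \<alpha> f)"
  have bm: "\<And>m. b m \<le> xmon k \<alpha> f m" using b(2) by (simp add: mdvd_def)
  have mem: "xmon k \<beta> s \<in> I" if "\<And>m. b m \<le> xmon k \<beta> s m" for \<beta> s
    using monomial_ideal_mdvd_closed[OF mi b(1) xmon_mem_mon[OF k]] that
    by (simp add: mdvd_def)
  have "b m = xmon k \<alpha> f m" for m
  proof (rule ccontr)
    assume ne: "b m \<noteq> xmon k \<alpha> f m"
    show False
    proof (cases "m = k")
      case True
      have "xmon k \<alpha> (b k) \<in> I"
      proof (rule mem)
        fix l show "b l \<le> xmon k \<alpha> (b k) l" using bm[of l] by (auto simp: xmon_def)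
      qed
      then have "f \<le> b k" using xmon_mem_iff_fI_le[OF mi k] f by simp
      with ne bm[of m] True show False by (simp add: xmon_def)
    next
      case False
      with ne bm[of m] have m: "1 \<le> m" "m < k" "b m < \<alpha> m"
        by (auto simp: xmon_def split: if_splits)
      have "xmon k (\<alpha>(m := \<alpha> m - 1)) f \<in> I"
      proof (rule mem)
        fix l show "b l \<le> xmon k (\<alpha>(m := \<alpha> m - 1)) f l"
          using bm[of l] m by (auto simp: xmon_def)
      qed
      then have "fI I k (\<alpha>(m := \<alpha> m - 1)) \<le> enat f"
        using xmon_mem_iff_fI_le[OF mi k] by blast
      moreover have "fI I k \<alpha> + 1 \<le> fI I k (\<alpha>(m := \<alpha> m - 1))"
        using m by (intro fI_strict_decrease[OF mi ar k _ _ _ not0]) auto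
      ultimately have "enat (Suc f) \<le> enat f" using f by (metis eSuc_enat eSuc_plus_1 order_trans)
      then show False by simp
    qed
  qed
  then show "b = xmon k \<alpha> f" by blast
qed

lemma Iset_xmon_zero_not_mem:
  assumes mi: "monomial_ideal n I" and i: "i \<in> {1..n}" and \<alpha>: "\<alpha> \<in> Iset n I \<omega> \<mu> i"
  shows "xmon (i + 1) \<alpha> 0 \<notin> I"
proof -
  have "enat (\<alpha> i) < fI I i \<alpha>" using \<alpha> i by (simp add: Iset_def)
  then have "xmon i \<alpha> (\<alpha> i) \<notin> I" using xmon_mem_iff_fI_le[OF mi i] by (simp add: not_le)
  moreover have "xmon (i + 1) \<alpha> 0 = xmon i \<alpha> (\<alpha> i)" using i by (auto simp: xmon_def fun_eq_iff)
  ultimately show ?thesis by simp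
qed

lemma xmon_below_last_mem:
  assumes mi: "monomial_ideal n I" and ar: "almost_revlex n I" and \<omega>: "\<omega> \<in> mingens I"
    and "0 < \<omega> \<mu>" and \<omega>_supp: "\<forall>j>\<mu>. \<omega> j = 0" and "\<mu> \<le> n"
    and k: "k \<in> {1..n}" "k < \<mu>"
  shows "xmon k \<alpha> (mdeg n \<omega>) \<in> I"
proof -
  have "mdeg n \<omega> \<le> mdeg n (xmon k \<alpha> (mdeg n \<omega>))"
    using member_le_sum[of k "{1..n}" "xmon k \<alpha> (mdeg n \<omega>)"] k by (simp add: mdeg_def xmon_def)
  moreover have "\<forall>j>\<mu>. xmon k \<alpha> (mdeg n \<omega>) j = 0" and "xmon k \<alpha> (mdeg n \<omega>) \<mu> < \<omega> \<mu>"
    using k \<open>0 < \<omega> \<mu>\<close> by (simp_all add: xmon_def)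
  ultimately show ?thesis
    using almost_revlex_mem_if_mdeg_ge[OF mi ar \<omega> \<omega>_supp _ \<open>\<mu> \<le> n\<close> xmon_mem_mon[OF k(1)]] k
    by simp
qed

lemma xmon_last_mem:
  assumes mi: "monomial_ideal n I" and ar: "almost_revlex n I" and \<omega>: "\<omega> \<in> mingens I"
    and "0 < \<omega> \<mu>" and \<omega>_supp: "\<forall>j>\<mu>. \<omega> j = 0" and "1 \<le> \<mu>" "\<mu> \<le> n"
    and \<alpha>_supp: "\<forall>j. (j = 0 \<or> \<mu> \<le> j) \<longrightarrow> \<alpha> j = 0"
    and \<alpha>_ge: "rl_le n (trunc (\<mu> - 1) \<omega>) \<alpha>"
  shows "\<exists>t. xmon \<mu> \<alpha> t \<in> I"
proof -
  define \<beta> where "\<beta> = trunc (\<mu> - 1) \<omega>"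
  have \<mu>: "\<mu> \<in> {1..n}" using assms by simp
  have "\<omega> \<in> mon n" using monomial_ideal_mem_mon[OF mi mingens_mem[OF \<omega>]] .
  have \<omega>_eq: "\<omega> = \<beta>(\<mu> := \<omega> \<mu>)"
  proof
    fix j show "\<omega> j = (\<beta>(\<mu> := \<omega> \<mu>)) j"
      using \<open>\<omega> \<in> mon n\<close> \<omega>_supp unfolding \<beta>_def trunc_def mon_def
      by (cases "j = 0"; cases "\<mu> < j"; cases "j = \<mu>") auto
  qed
  have xmon_eq: "xmon \<mu> \<alpha> t = \<alpha>(\<mu> := t)" for t
  proof
    fix j show "xmon \<mu> \<alpha> t j = (\<alpha>(\<mu> := t)) j"
      using \<alpha>_supp by (cases "j = 0") (auto simp: xmon_def)
  qed
  have \<beta>\<mu>: "\<beta> \<mu> = 0" and \<alpha>\<mu>: "\<alpha> \<mu> = 0" using \<alpha>_supp by (auto simp: \<beta>_def trunc_def)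
  have deg_\<omega>: "mdeg n \<omega> = mdeg n \<beta> + \<omega> \<mu>"
    using mdeg_fun_upd[OF \<mu>, of \<beta> "\<omega> \<mu>"] \<beta>\<mu> \<omega>_eq by simp
  have deg_x: "mdeg n (xmon \<mu> \<alpha> t) = mdeg n \<alpha> + t" for t
    using mdeg_fun_upd[OF \<mu>, of \<alpha> t] \<alpha>\<mu> xmon_eq by simp
  have x_mon: "xmon \<mu> \<alpha> t \<in> mon n" for t using xmon_mem_mon[OF \<mu>] .
  consider "\<alpha> = \<beta>" | "mdeg n \<alpha> > mdeg n \<beta>" | "mdeg n \<alpha> = mdeg n \<beta>" "rl_gt n \<alpha> \<beta>"
    using \<alpha>_ge unfolding \<beta>_def rl_le_def rl_gt_def by blast
  then show ?thesis
  proof cases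
    case 1
    with \<omega>_eq xmon_eq mingens_mem[OF \<omega>] show ?thesis by metis
  next
    case 2
    have "xmon \<mu> \<alpha> (\<omega> \<mu> - 1) \<in> I"
      using deg_x deg_\<omega> 2 \<open>0 < \<omega> \<mu>\<close>
      by (intro almost_revlex_mem_if_mdeg_ge[OF mi ar \<omega> \<omega>_supp \<open>1 \<le> \<mu>\<close> \<open>\<mu> \<le> n\<close> x_mon])
        (auto simp: xmon_def)
    then show ?thesis by blast
  next
    case 3
    have "rl_gt n (xmon \<mu> \<alpha> (\<omega> \<mu>)) \<omega>"
      using rl_gt_fun_upd_same[OF 3(2) _ \<mu>] \<alpha>\<mu> \<beta>\<mu> xmon_eq \<omega>_eq by metis
    moreover have "mdeg n (xmon \<mu> \<alpha> (\<omega> \<mu>)) = mdeg n \<omega>" using deg_x deg_\<omega> 3(1) by simp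
    ultimately show ?thesis using almost_revlexD[OF ar x_mon \<omega>] by blast
  qed
qed

lemma Iset_xmon_mem:
  assumes mi: "monomial_ideal n I" and ar: "almost_revlex n I" and \<omega>: "\<omega> \<in> mingens I"
    and "0 < \<omega> \<mu>" and \<omega>_supp: "\<forall>j>\<mu>. \<omega> j = 0" and "\<mu> \<le> n"
    and "1 \<le> i" "i \<le> \<mu> - 1" and \<alpha>: "\<alpha> \<in> Iset n I \<omega> \<mu> i"
  shows "\<exists>t. xmon (i + 1) \<alpha> t \<in> I"
proof (cases "i + 1 < \<mu>")
  case True
  with \<open>\<mu> \<le> n\<close> have "i + 1 \<in> {1..n}" by simp
  with True show ?thesis
    using xmon_below_last_mem[OF mi ar \<omega> \<open>0 < \<omega> \<mu>\<close> \<omega>_supp \<open>\<mu> \<le> n\<close>] by blast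
next
  case False
  with assms have "i + 1 = \<mu>" by simp
  moreover from this have "\<forall>j. (j = 0 \<or> \<mu> \<le> j) \<longrightarrow> \<alpha> j = 0"
    and "rl_le n (trunc (\<mu> - 1) \<omega>) \<alpha>" using \<alpha> by (auto simp: Iset_def)
  ultimately show ?thesis
    using xmon_last_mem[OF mi ar \<omega> \<open>0 < \<omega> \<mu>\<close> \<omega>_supp _ \<open>\<mu> \<le> n\<close>] by simp
qed

theorem lemma2p9:
  fixes n \<mu> i :: nat and I :: "(nat \<Rightarrow> nat) set" and \<omega> \<alpha> :: "nat \<Rightarrow> nat"
  assumes "monomial_ideal n I"
    and "almost_revlex n I"
    and "last_gen n I \<omega>"
    and "\<omega> \<mu> > 0" and "\<forall>j>\<mu>. \<omega> j = 0" and "\<mu> \<ge> 2"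
    and "1 \<le> i" and "i \<le> \<mu> - 1"
    and "\<alpha> \<in> Iset n I \<omega> \<mu> i"
  shows "(0 < fI I (i + 1) \<alpha> \<and> fI I (i + 1) \<alpha> < \<infinity>) \<and>
         xmon (i + 1) \<alpha> (the_enat (fI I (i + 1) \<alpha>)) \<in> mingens I \<and>
         (\<forall>j\<in>{1..i}. 1 \<le> \<alpha> j \<longrightarrow>
           fI I (i + 1) \<alpha> + 1 \<le> fI I (i + 1) (\<alpha>(j := \<alpha> j - 1)))"
proof -
  note mi = assms(1) and ar = assms(2)
  have \<omega>: "\<omega> \<in> mingens I" using assms(3) by (simp add: last_gen_def)
  have "\<mu> \<le> n"
  proof (rule ccontr)
    assume "\<not> \<mu> \<le> n"
    with monomial_ideal_mem_mon[OF mi mingens_mem[OF \<omega>]] have "\<omega> \<mu> = 0" by (simp add: mon_def)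
    with assms(4) show False by simp
  qed
  then have i: "i \<in> {1..n}" and i1: "i + 1 \<in> {1..n}" using assms(6-8) by simp_all
  have not0: "xmon (i + 1) \<alpha> 0 \<notin> I" using Iset_xmon_zero_not_mem[OF mi i assms(9)] .
  obtain f where f: "fI I (i + 1) \<alpha> = enat f"
    using Iset_xmon_mem[OF mi ar \<omega> assms(4,5) \<open>\<mu> \<le> n\<close> assms(7-9)] by (simp add: fI_def)
  have "0 < f" using not0 fI_enat_mem[OF mi i1 f] by (cases f) auto
  moreover have "\<forall>j\<in>{1..i}. 1 \<le> \<alpha> j \<longrightarrow>
      fI I (i + 1) \<alpha> + 1 \<le> fI I (i + 1) (\<alpha>(j := \<alpha> j - 1))"
    using fI_strict_decrease[OF mi ar i1 _ _ _ not0] by simp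
  ultimately show ?thesis
    using f xmon_fI_mem_mingens[OF mi ar i1 not0 f] by (simp add: zero_enat_def)
qed

end
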